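(* Let $n\ge 2$ and let $k_1,\dots,k_n$, $a_1,\dots,a_{n-1}$, $b_1,\dots,b_n$ be real or complex numbers. Let $A_1$ be the $n\times n$ matrix with entries $$(A_1)_{ij}=\begin{cases} k_i b_j, & i\le j,\\ k_j a_j, & i>j.\end{cases}$$ Then $$\det(A_1)=k_1b_n\,(k_2b_1-k_1a_1)(k_3b_2-k_2a_2)\cdots(k_nb_{n-1}-k_{n-1}a_{n-1}).$$ In particular, $A_1$ is singular if $k_1=0$, or $b_n=0$, or $k_{i+1}b_i-k_ia_i=0$ for some $i\in\{1,\dots,n-1\}$. *)

theory Defs
  imports "Jordan_Normal_Form.Determinant"
begin

text \<open>The matrix A_1 of the paper, with 1-based parameter sequences k, a, b;
  entry (i,j) (0-based indices) corresponds to paper entry (i+1, j+1).\<close>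
definition A1 :: "nat \<Rightarrow> (nat \<Rightarrow> 'a::comm_ring_1) \<Rightarrow> (nat \<Rightarrow> 'a) \<Rightarrow> (nat \<Rightarrow> 'a) \<Rightarrow> 'a mat" where
  "A1 n k a b = mat n n (\<lambda>(i, j). if i + 1 \<le> j + 1 then k (i + 1) * b (j + 1) else k (j + 1) * a (j + 1))"

end

theory Submission imports Defs begin

text \<open>The first row of \<open>A1\<close> is \<open>k\<^sub>1\<close> times the row \<open>(b\<^sub>1, \<dots>, b\<^sub>n)\<close>; pull that
  factor out. Subtracting \<open>k\<^sub>2\<close> times the new first row from the second row kills all of the
  second row except its first entry \<open>k\<^sub>1 a\<^sub>1 - k\<^sub>2 b\<^sub>1\<close>, and the complementary minor is the same
  kind of matrix built from the shifted sequences. Induction on \<open>n\<close> gives the product formula,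
  without any division, over every commutative ring.\<close>

definition A1_unscaled :: "nat \<Rightarrow> (nat \<Rightarrow> 'a::comm_ring_1) \<Rightarrow> (nat \<Rightarrow> 'a) \<Rightarrow> (nat \<Rightarrow> 'a) \<Rightarrow> 'a mat" where
  "A1_unscaled n k a b = mat n n (\<lambda>(i, j).
     if i = 0 then b (j + 1) else if i \<le> j then k (i + 1) * b (j + 1) else k (j + 1) * a (j + 1))"

lemma A1_unscaled_carrier: "A1_unscaled n k a b \<in> carrier_mat n n"
  by (simp add: A1_unscaled_def)

lemma A1_eq_multrow_A1_unscaled: "A1 n k a b = multrow 0 (k 1) (A1_unscaled n k a b)"
  by (rule eq_matI) (auto simp: A1_def A1_unscaled_def)

lemma det_A1_unscaled_Suc_Suc:
  "det (A1_unscaled (Suc (Suc m)) k a b)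
     = (k 2 * b 1 - k 1 * a 1) * det (A1_unscaled (Suc m) (k \<circ> Suc) (a \<circ> Suc) (b \<circ> Suc))"
proof -
  let ?n = "Suc (Suc m)"
  let ?H = "addrow (- k 2) 1 0 (A1_unscaled ?n k a b)"
  have H: "?H \<in> carrier_mat ?n ?n"
    by (simp add: A1_unscaled_carrier)
  have row1: "?H $$ (1, j) = (if j = 0 then k 1 * a 1 - k 2 * b 1 else 0)" if "j < ?n" for j
    using that by (simp add: A1_unscaled_def numeral_2_eq_2)
  have pivot: "?H $$ (1, 0) = k 1 * a 1 - k 2 * b 1"
    using row1[of 0] by simp
  have minor: "mat_delete ?H 1 0 = A1_unscaled (Suc m) (k \<circ> Suc) (a \<circ> Suc) (b \<circ> Suc)"
    by (rule eq_matI) (auto simp: mat_delete_def A1_unscaled_def)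
  have "det (A1_unscaled ?n k a b) = det ?H"
    by (rule det_addrow[symmetric, OF _ _ A1_unscaled_carrier]) auto
  also have "\<dots> = (\<Sum>j<?n. ?H $$ (1, j) * cofactor ?H 1 j)"
    by (rule laplace_expansion_row[OF H]) simp
  also have "\<dots> = ?H $$ (1, 0) * cofactor ?H 1 0"
    by (subst sum.mono_neutral_right[of "{..<?n}" "{0}"]) (use row1 in auto)
  finally show ?thesis
    unfolding cofactor_def minor pivot by (simp add: algebra_simps)
qed

lemma det_A1_unscaled:
  "det (A1_unscaled (Suc m) k a b) = b (Suc m) * (\<Prod>i=1..m. k (i + 1) * b i - k i * a i)"
proof (induction m arbitrary: k a b)
  case 0
  show ?case by (simp add: A1_unscaled_def det_def)
next
  case (Suc m)
  have "det (A1_unscaled (Suc (Suc m)) k a b)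
      = (k 2 * b 1 - k 1 * a 1) * (b (Suc (Suc m)) * (\<Prod>i=1..m. k (i + 2) * b (i + 1) - k (i + 1) * a (i + 1)))"
    using Suc.IH[of "k \<circ> Suc" "a \<circ> Suc" "b \<circ> Suc"] by (simp add: det_A1_unscaled_Suc_Suc comp_def)
  also have "(\<Prod>i=1..m. k (i + 2) * b (i + 1) - k (i + 1) * a (i + 1))
      = (\<Prod>i=2..Suc m. k (i + 1) * b i - k i * a i)"
    by (simp only: numeral_2_eq_2 prod.atLeast_Suc_atMost_Suc_shift[of _ "Suc 0" m]) (simp add: comp_def)
  also have "(k 2 * b 1 - k 1 * a 1) * (b (Suc (Suc m)) * \<dots>)
      = b (Suc (Suc m)) * (\<Prod>i=1..Suc m. k (i + 1) * b i - k i * a i)"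
    by (simp add: prod.atLeast_Suc_atMost numeral_2_eq_2 ac_simps)
  finally show ?case .
qed

lemma det_A1:
  assumes "n \<ge> 1"
  shows "det (A1 n k a b) = k 1 * b n * (\<Prod>i=1..n-1. k (i + 1) * b i - k i * a i)"
proof -
  obtain m where n: "n = Suc m"
    using assms by (cases n) auto
  show ?thesis
    unfolding A1_eq_multrow_A1_unscaled n
    by (simp add: det_multrow[OF _ A1_unscaled_carrier] det_A1_unscaled)
qed

theorem mainTheorem2:
  fixes k a b :: "nat \<Rightarrow> 'a::field"
  assumes "n \<ge> 2"
  shows "det (A1 n k a b) = k 1 * b n * (\<Prod>i=1..n-1. k (i+1) * b i - k i * a i)
    \<and> ((k 1 = 0 \<or> b n = 0 \<or> (\<exists>i\<in>{1..n-1}. k (i+1) * b i - k i * a i = 0)) \<longrightarrow> det (A1 n k a b) = 0)"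
proof -
  have det: "det (A1 n k a b) = k 1 * b n * (\<Prod>i=1..n-1. k (i+1) * b i - k i * a i)"
    using assms by (simp add: det_A1)
  have "(\<exists>i\<in>{1..n-1}. k (i+1) * b i - k i * a i = 0) \<Longrightarrow> (\<Prod>i=1..n-1. k (i+1) * b i - k i * a i) = 0"
    by (rule prod_zero) auto
  with det show ?thesis
    by auto
qed

end
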